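(* Let $1\le m\le N$, $a\in V$ and $b\in\wedge^m(V)$. Then $\partial(\mathbf{x})b\in\mathcal{P}_1\otimes\wedge^{m-1}(V)$ and $$\sum_{i=1}^Na_i\mathcal{D}_i\,\partial(\mathbf{x})b=(1+\gamma\kappa)\,\partial(a)b,$$ where the $\mathcal{D}_i$ are the Dunkl operators on $\mathcal{P}\otimes\wedge^{m-1}(V)$. In particular $\partial(\mathbf{x})b$ is singular for $\kappa=-1/\gamma$, i.e. $\mathcal{D}_i\partial(\mathbf{x})b=0$ for all $1\le i\le N$ when $\kappa=-1/\gamma$.
   Context: $R\subset\mathbb{R}^N$ is a reduced root system with $\operatorname{span}_{\mathbb{R}}R=\mathbb{R}^N$, $|v|^2=2$ for all $v\in R$, positive roots $R_+$; $W$ is the reflection group generated by $\sigma_v\colon x\mapsto x-\langle x,v\rangle v$, assumed to have one conjugacy class of reflections, so its reflection representation $\tau$ on $V=\mathbb{R}^N$ is irreducible. $\gamma:=2\#R_+/N$. For $a\in V$, $\partial(a)\colon\wedge^m(V)\to\wedge^{m-1}(V)$ is the linear map $\partial(a)(b_1\wedge\cdots\wedge b_m)=\sum_{i=1}^m(-1)^{i-1}\langle a,b_i\rangle\, b_1\wedge\cdots\wedge\widehat{b_i}\wedge\cdots\wedge b_m$. With $\{u_i\}$ the standard orthonormal basis and $\mathbf{x}=\sum_i x_i\otimes u_i$, $\partial(\mathbf{x})b:=\sum_{i=1}^N x_i\otimes\partial(u_i)b$. $\tau_k$ is the representation of $W$ on $\wedge^k(V)$ induced by $\tau$; $W$ acts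 on $\mathcal{P}\otimes\wedge^k(V)$ by $w(p(x)\otimes b)=p(xw)\otimes\tau_k(w)b$, and the Dunkl operators (constant parameter $\kappa$) are $\mathcal{D}_i(p\otimes b)=\frac{\partial p}{\partial x_i}\otimes b+\kappa\sum_{v\in R_+}\frac{p(x)-p(x\sigma_v)}{\langle x,v\rangle}v_i\otimes\tau_k(\sigma_v)b$. *)

theory Defs
  imports "HOL-Analysis.Analysis"
begin

text \<open>V = real^'n, N = CARD('n), standard orthonormal basis axis i 1.\<close>

text \<open>Reflection along a root v (normalised |v|^2 = 2): x - <x,v> v.\<close>
definition refl :: "real^'n \<Rightarrow> real^'n \<Rightarrow> real^'n" where
  "refl v x = x - (x \<bullet> v) *\<^sub>R v"

definition root_system :: "(real^'n) set \<Rightarrow> bool" where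
  "root_system R \<longleftrightarrow> finite R \<and> 0 \<notin> R \<and> span R = UNIV
     \<and> (\<forall>\<alpha>\<in>R. \<forall>\<beta>\<in>R. refl \<alpha> \<beta> \<in> R)
     \<and> (\<forall>\<alpha>\<in>R. \<forall>c::real. c *\<^sub>R \<alpha> \<in> R \<longrightarrow> c = 1 \<or> c = -1)"

definition positive_roots :: "(real^'n) set \<Rightarrow> (real^'n) set \<Rightarrow> bool" where
  "positive_roots R Rp \<longleftrightarrow>
     (\<exists>u. (\<forall>v\<in>R. u \<bullet> v \<noteq> 0) \<and> Rp = {v\<in>R. u \<bullet> v > 0})"

inductive_set refl_group :: "(real^'n) set \<Rightarrow> (real^'n \<Rightarrow> real^'n) set" for R where
  refl_group_id: "id \<in> refl_group R"
| refl_group_step: "w \<in> refl_group R \<Longrightarrow> v \<in> R \<Longrightarrow> refl v \<circ> w \<in> refl_group R"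

definition one_refl_class :: "(real^'n) set \<Rightarrow> bool" where
  "one_refl_class R \<longleftrightarrow>
     (\<forall>u\<in>R. \<forall>v\<in>R. \<exists>w\<in>refl_group R. w \<circ> refl u = refl v \<circ> w)"

text \<open>Model of the exterior power wedge^k(V): antisymmetric tensors, i.e. coefficient
  functions b on index lists (b(i1..ik) = coefficient w.r.t. u_i1 \<otimes> ... \<otimes> u_ik),
  vanishing off length k and changing sign under transposition of two positions.
  The decomposable b1\<and>...\<and>bk corresponds to the tensor of its k\<times>k minors.\<close>
type_synonym 'n form = "'n list \<Rightarrow> real"

definition wedge :: "nat \<Rightarrow> ('n::finite) form set" where
  "wedge k = {b. (\<forall>is. length is \<noteq> k \<longrightarrow> b is = 0) \<and>
      (\<forall>is i j. i < length is \<and> j < length is \<and> i \<noteq> j \<longrightarrow>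
          b (is[i := is ! j, j := is ! i]) = - b is)}"

text \<open>The operator \<partial>(a): wedge^m \<rightarrow> wedge^(m-1) (interior product; in this model
  \<partial>(a)(b1\<and>...\<and>bm) = \<Sum>_i (-1)^(i-1) <a,b_i> b1\<and>..\<hat>b_i..\<and>bm becomes the contraction below).\<close>
definition contr :: "real^'n \<Rightarrow> ('n::finite) form \<Rightarrow> 'n form" where
  "contr a b = (\<lambda>js. \<Sum>i\<in>UNIV. a $ i * b (i # js))"

definition contr_x :: "('n::finite) form \<Rightarrow> real^'n \<Rightarrow> 'n form" where
  "contr_x b = (\<lambda>x. \<lambda>js. \<Sum>i\<in>UNIV. x $ i * contr (axis i 1) b js)"

definition P1_wedge :: "nat \<Rightarrow> (real^('n::finite) \<Rightarrow> 'n form) set" where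
  "P1_wedge k = {f. \<exists>c::'n \<Rightarrow> 'n form. (\<forall>i. c i \<in> wedge k) \<and>
                     f = (\<lambda>x js. \<Sum>i\<in>UNIV. x $ i * c i js)}"

definition tau_k :: "(real^'n \<Rightarrow> real^'n) \<Rightarrow> ('n::finite) form \<Rightarrow> 'n form" where
  "tau_k g b = (\<lambda>js. \<Sum>is\<in>{is. length is = length js}.
       (\<Prod>l<length js. (g (axis (is ! l) 1)) $ (js ! l)) * b is)"

definition partial_i :: "'n \<Rightarrow> (real^('n::finite) \<Rightarrow> real) \<Rightarrow> real^'n \<Rightarrow> real" where
  "partial_i i p x = deriv (\<lambda>t. p (x + t *\<^sub>R axis i 1)) 0"

text \<open>Divided difference (p(x) - p(x sigma_v)) / <x,v>, componentwise; on the hyperplane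
  <x,v> = 0 it is given by its (polynomial, hence continuous) extension.\<close>
definition divdiff :: "real^'n \<Rightarrow> (real^('n::finite) \<Rightarrow> 'n form) \<Rightarrow> real^'n \<Rightarrow> 'n form" where
  "divdiff v f x = (\<lambda>is. Lim (at x within {y. y \<bullet> v \<noteq> 0})
                          (\<lambda>y. (f y is - f (refl v y) is) / (y \<bullet> v)))"

definition dunkl :: "(real^'n) set \<Rightarrow> real \<Rightarrow> 'n \<Rightarrow> (real^('n::finite) \<Rightarrow> 'n form)
                     \<Rightarrow> real^'n \<Rightarrow> 'n form" where
  "dunkl Rp \<kappa> i f x = (\<lambda>js. partial_i i (\<lambda>y. f y js) x
       + \<kappa> * (\<Sum>v\<in>Rp. v $ i * tau_k (refl v) (divdiff v f x) js))"

end

theory Submission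
  imports Defs
begin

text \<open>
  The form \<open>\<partial>(x)b\<close> is the contraction of \<open>b\<close> with \<open>x\<close> and hence linear in \<open>x\<close>: its
  derivative in direction \<open>u\<^sub>i\<close> is \<open>\<partial>(u\<^sub>i)b\<close> and its divided difference along a root \<open>v\<close>
  is \<open>\<partial>(v)b\<close>. By antisymmetry, \<open>\<partial>(v)b\<close> is killed by contraction with \<open>v\<close> in every slot,
  so it is fixed by \<open>\<tau>(\<sigma>\<^sub>v)\<close>. Therefore \<open>\<Sum>\<^sub>i a\<^sub>i D\<^sub>i \<partial>(x)b = \<partial>(a)b + \<kappa> \<partial>(M a)b\<close>, where
  \<open>M a\<close> is the sum of \<open>\<langle>a,v\<rangle>v\<close> over the positive roots. The operator \<open>M\<close> commutes with
  \<open>W\<close>, so every root is an eigenvector; all reflections being conjugate, the eigenvalues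
  agree, and since the roots span, \<open>M\<close> is a scalar, which its trace identifies as \<open>\<gamma>\<close>.
\<close>

lemma refl_linear: "linear (refl v)"
  by (simp add: refl_def linear_iff inner_add_left algebra_simps)

lemma refl_involution: "v \<bullet> v = 2 \<Longrightarrow> refl v (refl v x) = x"
  by (simp add: refl_def inner_diff_left algebra_simps)

lemma refl_self: "v \<bullet> v = 2 \<Longrightarrow> refl v v = - v"
  by (simp add: refl_def vec_eq_iff)

lemma refl_inner_refl: "v \<bullet> v = 2 \<Longrightarrow> refl v x \<bullet> refl v y = x \<bullet> y"
  by (simp add: refl_def inner_diff_left inner_diff_right algebra_simps inner_commute)

lemma refl_axis_component: "refl v (axis i 1) $ j = (if i = j then 1 else 0) - v $ i * v $ j"
proof -
  have "axis i 1 \<bullet> v = v $ i"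
    by (simp add: inner_axis')
  then show ?thesis
    by (simp add: refl_def axis_def)
qed

lemma parallel_if_refl_eq_neg:
  assumes "refl v y = - y"
  shows "y = ((y \<bullet> v) / 2) *\<^sub>R v"
proof -
  have "2 *\<^sub>R y = (y \<bullet> v) *\<^sub>R v"
    using assms by (simp add: refl_def algebra_simps scaleR_2)
  then have "(1 / 2) *\<^sub>R (2 *\<^sub>R y) = (1 / 2) *\<^sub>R ((y \<bullet> v) *\<^sub>R v)"
    by simp
  then show ?thesis
    by simp
qed

lemma eigenvector_if_commutes_refl:
  assumes "linear f" "\<alpha> \<bullet> \<alpha> = 2" "f (refl \<alpha> \<alpha>) = refl \<alpha> (f \<alpha>)"
  shows "f \<alpha> = ((f \<alpha> \<bullet> \<alpha>) / 2) *\<^sub>R \<alpha>"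
proof (rule parallel_if_refl_eq_neg)
  show "refl \<alpha> (f \<alpha>) = - f \<alpha>"
    using assms by (simp add: refl_self linear_neg)
qed

lemma refl_group_linear: "w \<in> refl_group R \<Longrightarrow> linear w"
  by (induction rule: refl_group.induct)
    (simp_all add: linear_id[unfolded id_def] linear_compose[OF _ refl_linear, unfolded o_def])

lemma refl_group_inner:
  assumes "\<forall>v\<in>R. v \<bullet> v = 2" "w \<in> refl_group R"
  shows "w x \<bullet> w y = x \<bullet> y"
  using assms(2)
  by (induction arbitrary: x y rule: refl_group.induct) (simp_all add: assms(1) refl_inner_refl)

lemma root_system_nonempty:
  assumes "root_system R"
  shows "R \<noteq> {}"
proof
  assume "R = {}"
  have "axis undefined (1::real) \<in> span R"
    using assms by (simp add: root_system_def)
  with \<open>R = {}\<close> show False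
    by (simp add: axis_eq_0_iff)
qed

lemma root_system_uminus:
  assumes "root_system R" "\<forall>v\<in>R. v \<bullet> v = 2" "v \<in> R"
  shows "- v \<in> R"
proof -
  have "refl v v \<in> R"
    using assms by (simp add: root_system_def)
  then show ?thesis
    using assms by (simp add: refl_self)
qed

lemma bij_betw_refl_roots:
  assumes "\<alpha> \<bullet> \<alpha> = 2" "\<forall>\<beta>\<in>R. refl \<alpha> \<beta> \<in> R"
  shows "bij_betw (refl \<alpha>) R R"
  by (rule bij_betw_byWitness[where f' = "refl \<alpha>"]) (use assms refl_involution in auto)

section \<open>The root operator is scalar\<close>

definition root_operator :: "(real^'n) set \<Rightarrow> real^'n \<Rightarrow> real^'n" where
  "root_operator R x = (\<Sum>v\<in>R. (x \<bullet> v) *\<^sub>R v)"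

lemma linear_root_operator: "linear (root_operator R)"
  by (simp add: root_operator_def linear_iff inner_add_left scaleR_add_left sum.distrib
      scaleR_sum_right)

lemma root_operator_refl:
  assumes "\<alpha> \<bullet> \<alpha> = 2" "\<forall>\<beta>\<in>R. refl \<alpha> \<beta> \<in> R"
  shows "root_operator R (refl \<alpha> x) = refl \<alpha> (root_operator R x)"
proof -
  have "root_operator R (refl \<alpha> x) = (\<Sum>u\<in>R. (refl \<alpha> x \<bullet> refl \<alpha> u) *\<^sub>R refl \<alpha> u)"
    unfolding root_operator_def
    by (rule sum.reindex_bij_betw[OF bij_betw_refl_roots[OF assms], symmetric])
  also have "\<dots> = (\<Sum>u\<in>R. (x \<bullet> u) *\<^sub>R refl \<alpha> u)"
    by (simp add: refl_inner_refl[OF assms(1)])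
  also have "\<dots> = refl \<alpha> (root_operator R x)"
    by (simp add: root_operator_def linear_sum[OF refl_linear] linear_cmul[OF refl_linear])
  finally show ?thesis .
qed

lemma root_operator_refl_group:
  assumes "\<forall>v\<in>R. v \<bullet> v = 2" "\<forall>\<alpha>\<in>R. \<forall>\<beta>\<in>R. refl \<alpha> \<beta> \<in> R" "w \<in> refl_group R"
  shows "root_operator R (w x) = w (root_operator R x)"
  using assms(3)
  by (induction arbitrary: x rule: refl_group.induct) (simp_all add: assms root_operator_refl)

lemma root_operator_root:
  assumes "\<forall>v\<in>R. v \<bullet> v = 2" "\<forall>\<alpha>\<in>R. \<forall>\<beta>\<in>R. refl \<alpha> \<beta> \<in> R" "\<alpha> \<in> R"
  shows "root_operator R \<alpha> = ((root_operator R \<alpha> \<bullet> \<alpha>) / 2) *\<^sub>R \<alpha>"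
  using assms by (intro eigenvector_if_commutes_refl linear_root_operator root_operator_refl) auto

text \<open>A conjugating \<open>w\<close> maps \<open>u\<close> to \<open>\<pm>v\<close> and intertwines the operator, so the
  Rayleigh quotients at \<open>u\<close> and \<open>v\<close> agree.\<close>
lemma root_operator_inner_root_eq:
  assumes norm: "\<forall>v\<in>R. v \<bullet> v = 2" and closed: "\<forall>\<alpha>\<in>R. \<forall>\<beta>\<in>R. refl \<alpha> \<beta> \<in> R"
    and "one_refl_class R" "u \<in> R" "v \<in> R"
  shows "root_operator R v \<bullet> v = root_operator R u \<bullet> u"
proof -
  obtain w where w: "w \<in> refl_group R" "w \<circ> refl u = refl v \<circ> w"
    using assms unfolding one_refl_class_def by blast
  have lin: "linear w" and isometry: "\<And>x y. w x \<bullet> w y = x \<bullet> y"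
    using refl_group_linear refl_group_inner norm w(1) by blast+
  have uu: "u \<bullet> u = 2" and vv: "v \<bullet> v = 2"
    using assms by auto
  define c where "c = (w u \<bullet> v) / 2"
  have "refl v (w u) = - w u"
    using fun_cong[OF w(2), of u] by (simp add: refl_self[OF uu] linear_neg[OF lin])
  then have wu: "w u = c *\<^sub>R v"
    unfolding c_def by (rule parallel_if_refl_eq_neg)
  have "2 = w u \<bullet> w u"
    using isometry uu by simp
  also have "\<dots> = c\<^sup>2 * 2"
    by (simp add: wu vv power2_eq_square)
  finally have c2: "c\<^sup>2 = 1"
    by simp
  have "root_operator R u \<bullet> u = w (root_operator R u) \<bullet> w u"
    by (simp add: isometry)
  also have "\<dots> = root_operator R (w u) \<bullet> w u"
    by (simp add: root_operator_refl_group[OF norm closed w(1)])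
  also have "\<dots> = c\<^sup>2 * (root_operator R v \<bullet> v)"
    by (simp add: wu linear_cmul[OF linear_root_operator] power2_eq_square)
  finally show ?thesis
    by (simp add: c2)
qed

lemma trace_root_operator:
  "(\<Sum>k\<in>UNIV. root_operator R (axis k 1) $ k) = (\<Sum>v\<in>R. v \<bullet> v)"
  unfolding root_operator_def
  by (simp add: sum_component inner_axis', subst sum.swap) (simp add: inner_vec_def)

lemma root_operator_eq_scaleR:
  assumes rs: "root_system R" and norm: "\<forall>v\<in>R. v \<bullet> v = 2" and "one_refl_class R"
  shows "root_operator R x = (2 * real (card R) / real CARD('n)) *\<^sub>R (x :: real^'n)"
proof -
  have closed: "\<forall>\<alpha>\<in>R. \<forall>\<beta>\<in>R. refl \<alpha> \<beta> \<in> R" and span: "span R = UNIV"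
    using rs unfolding root_system_def by auto
  obtain u where u: "u \<in> R"
    using root_system_nonempty[OF rs] by blast
  define \<mu> where "\<mu> = (root_operator R u \<bullet> u) / 2"
  have "root_operator R v = \<mu> *\<^sub>R v" if "v \<in> R" for v
    using root_operator_root[OF norm closed that]
    unfolding root_operator_inner_root_eq[OF norm closed assms(3) u that] \<mu>_def .
  then have scalar: "root_operator R y = \<mu> *\<^sub>R y" for y
    using linear_eq_on_span[OF linear_root_operator linear_scaleR, of R] span by blast
  have "\<mu> * real CARD('n) = (\<Sum>k\<in>UNIV. root_operator R (axis k 1) $ k)"
    by (simp add: scalar)
  also have "\<dots> = (\<Sum>v\<in>R. 2)"
    unfolding trace_root_operator using norm by (intro sum.cong) auto
  also have "\<dots> = 2 * real (card R)"
    by simp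
  finally have "\<mu> = 2 * real (card R) / real CARD('n)"
    by (simp add: eq_divide_eq)
  then show ?thesis
    by (simp add: scalar)
qed

lemma positive_roots_subset: "positive_roots R Rp \<Longrightarrow> Rp \<subseteq> R"
  by (auto simp: positive_roots_def)

lemma positive_roots_disjoint_uminus: "positive_roots R Rp \<Longrightarrow> Rp \<inter> uminus ` Rp = {}"
  by (auto simp: positive_roots_def)

lemma roots_eq_positive_Un_uminus:
  assumes "positive_roots R Rp" "\<forall>v\<in>R. - v \<in> R"
  shows "R = Rp \<union> uminus ` Rp"
proof -
  obtain h where h: "\<forall>v\<in>R. h \<bullet> v \<noteq> 0" and Rp: "Rp = {v\<in>R. h \<bullet> v > 0}"
    using assms(1) unfolding positive_roots_def by blast
  have "v \<in> Rp \<or> - v \<in> Rp" if "v \<in> R" for v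
    using h that assms(2) by (auto simp: Rp)
  then have "R \<subseteq> Rp \<union> uminus ` Rp"
    by (metis UnI1 UnI2 image_eqI minus_minus subsetI)
  then show ?thesis
    using assms by (auto simp: Rp)
qed

lemma sum_roots_eq_sum_positive:
  assumes "positive_roots R Rp" "\<forall>v\<in>R. - v \<in> R" "finite R"
  shows "sum f R = (\<Sum>v\<in>Rp. f v + f (- v))"
proof -
  have "finite Rp"
    using finite_subset[OF positive_roots_subset[OF assms(1)] assms(3)] .
  then have "sum f R = sum f Rp + sum f (uminus ` Rp)"
    by (subst roots_eq_positive_Un_uminus[OF assms(1,2)], intro sum.union_disjoint)
      (simp_all add: positive_roots_disjoint_uminus[OF assms(1)])
  also have "sum f (uminus ` Rp) = (\<Sum>v\<in>Rp. f (- v))"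
    by (simp add: sum.reindex)
  finally show ?thesis
    by (simp add: sum.distrib)
qed

lemma card_roots_eq_twice_positive:
  assumes "positive_roots R Rp" "\<forall>v\<in>R. - v \<in> R" "finite R"
  shows "card R = 2 * card Rp"
  using sum_roots_eq_sum_positive[OF assms, of "\<lambda>_. 1::nat"] by simp

lemma sum_positive_roots_inner_scaleR:
  assumes rs: "root_system R" and norm: "\<forall>v\<in>R. v \<bullet> v = 2" and pr: "positive_roots R Rp"
    and "one_refl_class R"
  shows "(\<Sum>v\<in>Rp. (a \<bullet> v) *\<^sub>R v) = (2 * real (card Rp) / real CARD('n)) *\<^sub>R (a :: real^'n)"
proof -
  have neg: "\<forall>v\<in>R. - v \<in> R"
    using root_system_uminus[OF rs norm] by blast
  have "finite R"
    using rs by (simp add: root_system_def)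
  have "2 *\<^sub>R (\<Sum>v\<in>Rp. (a \<bullet> v) *\<^sub>R v) = root_operator R a"
    unfolding root_operator_def sum_roots_eq_sum_positive[OF pr neg \<open>finite R\<close>]
    by (simp only: scaleR_2 inner_minus_right scaleR_minus_left scaleR_minus_right minus_minus
        sum.distrib)
  also have "\<dots> = 2 *\<^sub>R ((2 * real (card Rp) / real CARD('n)) *\<^sub>R a)"
    by (simp add: root_operator_eq_scaleR[OF rs norm assms(4)]
        card_roots_eq_twice_positive[OF pr neg \<open>finite R\<close>])
  finally have "(1 / 2) *\<^sub>R (2 *\<^sub>R (\<Sum>v\<in>Rp. (a \<bullet> v) *\<^sub>R v))
      = (1 / 2) *\<^sub>R (2 *\<^sub>R ((2 * real (card Rp) / real CARD('n)) *\<^sub>R a))"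
    by simp
  then show ?thesis
    by simp
qed

lemma card_positive_roots_pos:
  assumes rs: "root_system R" and norm: "\<forall>v\<in>R. v \<bullet> v = 2" and pr: "positive_roots R Rp"
  shows "0 < card Rp"
proof -
  have "finite R"
    using rs by (simp add: root_system_def)
  then have "0 < card R"
    using root_system_nonempty[OF rs] by (simp add: card_gt_0_iff)
  moreover have "\<forall>v\<in>R. - v \<in> R"
    using root_system_uminus[OF rs norm] by blast
  ultimately show ?thesis
    using card_roots_eq_twice_positive[OF pr _ \<open>finite R\<close>] by simp
qed

section \<open>Contractions of antisymmetric tensors\<close>

lemma sum_lists_length_Suc:
  "(\<Sum>is\<in>{is::'n::finite list. length is = Suc k}. f is)
    = (\<Sum>i\<in>UNIV. \<Sum>is\<in>{is. length is = k}. f (i # is))"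
proof -
  have "{is::'n list. length is = Suc k} = case_prod Cons ` (UNIV \<times> {is. length is = k})"
    by (auto simp: image_iff length_Suc_conv)
  moreover have "inj_on (case_prod Cons) (UNIV \<times> {is::'n list. length is = k})"
    by (auto simp: inj_on_def)
  ultimately show ?thesis
    by (simp add: sum.reindex sum.cartesian_product split_def)
qed

lemma sum_axis_mult: "(\<Sum>k\<in>UNIV. axis i (1::real) $ k * f k) = f i"
proof -
  have "(\<Sum>k\<in>UNIV. axis i (1::real) $ k * f k) = (\<Sum>k\<in>UNIV. if k = i then f k else 0)"
    by (rule sum.cong) (auto simp: axis_def)
  then show ?thesis
    by simp
qed

lemma contr_axis: "contr (axis i 1) b js = b (i # js)"
  by (simp add: contr_def sum_axis_mult)

lemma contr_x_eq_contr: "contr_x b x = contr x b"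
  unfolding contr_x_def contr_axis by (simp add: contr_def)

lemma contr_add_scaleR: "contr (x + c *\<^sub>R v) b js = contr x b js + c * contr v b js"
  by (simp add: contr_def algebra_simps sum.distrib sum_distrib_left)

lemma contr_diff_scaleR: "contr (x - c *\<^sub>R v) b js = contr x b js - c * contr v b js"
  by (simp add: contr_def algebra_simps sum_subtractf sum_distrib_left)

lemma contr_scaleR: "contr (c *\<^sub>R v) b js = c * contr v b js"
  by (simp add: contr_def algebra_simps sum_distrib_left)

lemma contr_sum_scaleR: "contr (\<Sum>v\<in>S. f v *\<^sub>R v) b js = (\<Sum>v\<in>S. f v * contr v b js)"
  unfolding contr_def
  by (simp add: sum_component sum_distrib_left sum_distrib_right mult.assoc, subst sum.swap, simp)

lemma contr_in_wedge:
  assumes "b \<in> wedge (Suc k)"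
  shows "contr a b \<in> wedge k"
  unfolding wedge_def
proof (intro CollectI conjI allI impI)
  fix js :: "'a list"
  assume "length js \<noteq> k"
  then show "contr a b js = 0"
    using assms by (simp add: wedge_def contr_def)
next
  fix js :: "'a list" and p q
  assume "p < length js \<and> q < length js \<and> p \<noteq> q"
  then have "Suc p < length (i # js) \<and> Suc q < length (i # js) \<and> Suc p \<noteq> Suc q" for i
    by simp
  then have "b ((i # js)[Suc p := (i # js) ! Suc q, Suc q := (i # js) ! Suc p]) = - b (i # js)" for i
    using assms unfolding wedge_def by blast
  then have "b (i # js[p := js ! q, q := js ! p]) = - b (i # js)" for i
    by simp
  then show "contr a b (js[p := js ! q, q := js ! p]) = - contr a b js"
    by (simp add: contr_def sum_negf)
qed

lemma contr_x_in_P1_wedge: "b \<in> wedge (Suc k) \<Longrightarrow> contr_x b \<in> P1_wedge k"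
  unfolding P1_wedge_def contr_x_def
  by (auto intro!: exI[of _ "\<lambda>i. contr (axis i 1) b"] contr_in_wedge)

text \<open>Equivalently, \<open>F\<close> lies in the tensor power of \<open>v\<^sup>\<bottom>\<close>.\<close>
definition slot_annihilated :: "real^'n \<Rightarrow> 'n form \<Rightarrow> bool" where
  "slot_annihilated v F \<longleftrightarrow> (\<forall>is l. l < length is \<longrightarrow> (\<Sum>i\<in>UNIV. v $ i * F (is[l := i])) = 0)"

lemma slot_annihilated_Cons:
  assumes "slot_annihilated v F"
  shows "slot_annihilated v (\<lambda>is. F (j # is))"
  unfolding slot_annihilated_def
proof (intro allI impI)
  fix "is" :: "'a list" and l
  assume "l < length is"
  then have "Suc l < length (j # is)"
    by simp
  from assms[unfolded slot_annihilated_def, rule_format, OF this]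
  show "(\<Sum>i\<in>UNIV. v $ i * F (j # is[l := i])) = 0"
    by simp
qed

lemma slot_annihilated_contr_self:
  assumes "b \<in> wedge m"
  shows "slot_annihilated v (contr v b)"
  unfolding slot_annihilated_def
proof (intro allI impI)
  fix "is" :: "'a list" and l
  assume l: "l < length is"
  have swap: "b (k # is[l := i]) = - b (i # is[l := k])" for i k
  proof -
    have "Suc l < length (k # is[l := i])"
      using l by simp
    then have "b ((k # is[l := i])[0 := (k # is[l := i]) ! Suc l, Suc l := (k # is[l := i]) ! 0])
        = - b (k # is[l := i])"
      using assms unfolding wedge_def by blast
    then show ?thesis
      using l by simp
  qed
  define S where "S = (\<Sum>i\<in>UNIV. \<Sum>k\<in>UNIV. v $ i * v $ k * b (k # is[l := i]))"
  have "S = (\<Sum>i\<in>UNIV. \<Sum>k\<in>UNIV. - (v $ i * v $ k * b (i # is[l := k])))"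
    unfolding S_def by (intro sum.cong refl) (subst swap, simp)
  also have "\<dots> = - (\<Sum>k\<in>UNIV. \<Sum>i\<in>UNIV. v $ k * v $ i * b (k # is[l := i]))"
    by (simp add: sum_negf)
  also have "\<dots> = - S"
    unfolding S_def by (subst sum.swap) (simp add: mult.commute)
  finally have "S = 0"
    by simp
  then show "(\<Sum>i\<in>UNIV. v $ i * contr v b (is[l := i])) = 0"
    by (simp add: S_def contr_def sum_distrib_left mult.assoc)
qed

lemma tau_k_refl_fixed:
  assumes "slot_annihilated v F"
  shows "tau_k (refl v) F js = F js"
  using assms
proof (induction js arbitrary: F)
  case Nil
  have "{is::'a list. length is = 0} = {[]}"
    by auto
  then show ?case
    by (simp add: tau_k_def)
next
  case (Cons j js)
  have "tau_k (refl v) F (j # js)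
      = (\<Sum>i\<in>UNIV. \<Sum>is\<in>{is. length is = length js}.
           refl v (axis i 1) $ j * ((\<Prod>l<length js. refl v (axis (is ! l) 1) $ (js ! l)) * F (i # is)))"
    by (simp only: tau_k_def length_Cons sum_lists_length_Suc prod.lessThan_Suc_shift nth_Cons_0
        nth_Cons_Suc mult.assoc)
  also have "\<dots> = (\<Sum>i\<in>UNIV. refl v (axis i 1) $ j * tau_k (refl v) (\<lambda>is. F (i # is)) js)"
    by (simp add: tau_k_def sum_distrib_left)
  also have "\<dots> = (\<Sum>i\<in>UNIV. refl v (axis i 1) $ j * F (i # js))"
    using Cons.IH[OF slot_annihilated_Cons[OF Cons.prems]] by simp
  also have "\<dots> = (\<Sum>i\<in>UNIV. (if i = j then F (i # js) else 0) - v $ j * (v $ i * F (i # js)))"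
    by (intro sum.cong refl) (simp add: refl_axis_component algebra_simps)
  also have "\<dots> = F (j # js) - v $ j * (\<Sum>i\<in>UNIV. v $ i * F (i # js))"
    by (simp only: sum_subtractf sum.delta' sum_distrib_left) simp
  also have "(\<Sum>i\<in>UNIV. v $ i * F (i # js)) = 0"
    using Cons.prems[unfolded slot_annihilated_def, rule_format, of 0 "j # js"] by simp
  finally show ?case
    by simp
qed

section \<open>Dunkl operators applied to \<open>\<partial>(x)b\<close>\<close>

lemma partial_i_contr_x: "partial_i i (\<lambda>y. contr_x b y js) x = b (i # js)"
proof -
  have "(\<lambda>t. contr_x b (x + t *\<^sub>R axis i 1) js) = (\<lambda>t. contr x b js + t * b (i # js))"
    by (simp add: contr_x_eq_contr contr_add_scaleR contr_axis)
  moreover have "((\<lambda>t. contr x b js + t * b (i # js)) has_field_derivative b (i # js)) (at 0)"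
    by (auto intro!: derivative_eq_intros)
  ultimately show ?thesis
    unfolding partial_i_def by (simp add: DERIV_imp_deriv)
qed

lemma islimpt_inner_neq_zero:
  fixes v :: "real^'n"
  assumes "v \<noteq> 0"
  shows "x islimpt {y. y \<bullet> v \<noteq> 0}"
proof -
  have "- {y. y \<bullet> v \<noteq> 0} = {y. v \<bullet> y = 0}"
    by (auto simp: inner_commute)
  then have "closure {y. y \<bullet> v \<noteq> 0} = UNIV"
    using assms by (simp add: closure_interior)
  then show ?thesis
    by (metis islimpt_UNIV limpt_of_closure)
qed

lemma divdiff_contr_x:
  assumes "v \<noteq> 0"
  shows "divdiff v (contr_x b) x = contr v b"
proof
  fix "is"
  let ?S = "{y. y \<bullet> v \<noteq> 0}"
  have "eventually (\<lambda>y. (contr_x b y is - contr_x b (refl v y) is) / (y \<bullet> v) = contr v b is)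
      (at x within ?S)"
    unfolding eventually_at_filter by (simp add: contr_x_eq_contr refl_def contr_diff_scaleR)
  then have "((\<lambda>y. (contr_x b y is - contr_x b (refl v y) is) / (y \<bullet> v)) \<longlongrightarrow> contr v b is)
      (at x within ?S)"
    by (rule tendsto_eventually)
  moreover have "\<not> trivial_limit (at x within ?S)"
    using islimpt_inner_neq_zero[OF assms] by (simp add: trivial_limit_within)
  ultimately show "divdiff v (contr_x b) x is = contr v b is"
    unfolding divdiff_def by (simp add: tendsto_Lim)
qed

lemma dunkl_contr_x:
  assumes "b \<in> wedge m" "0 \<notin> Rp"
  shows "dunkl Rp \<kappa> i (contr_x b) x js = b (i # js) + \<kappa> * (\<Sum>v\<in>Rp. v $ i * contr v b js)"
proof -
  have "tau_k (refl v) (divdiff v (contr_x b) x) js = contr v b js" if "v \<in> Rp" for v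
  proof -
    have "v \<noteq> 0"
      using that assms(2) by blast
    then show ?thesis
      by (simp add: divdiff_contr_x tau_k_refl_fixed slot_annihilated_contr_self[OF assms(1)])
  qed
  then show ?thesis
    unfolding dunkl_def by (simp add: partial_i_contr_x)
qed

lemma sum_dunkl_contr_x:
  assumes "b \<in> wedge m" "0 \<notin> Rp"
  shows "(\<Sum>i\<in>UNIV. a $ i * dunkl Rp \<kappa> i (contr_x b) x js)
    = contr a b js + \<kappa> * contr (\<Sum>v\<in>Rp. (a \<bullet> v) *\<^sub>R v) b js"
proof -
  have "(\<Sum>i\<in>UNIV. a $ i * dunkl Rp \<kappa> i (contr_x b) x js)
      = (\<Sum>i\<in>UNIV. a $ i * b (i # js))
        + \<kappa> * (\<Sum>v\<in>Rp. (\<Sum>i\<in>UNIV. a $ i * v $ i) * contr v b js)"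
    by (simp add: dunkl_contr_x[OF assms] algebra_simps sum.distrib sum_distrib_left
        sum_distrib_right, subst sum.swap, simp add: mult.assoc)
  also have "(\<Sum>i\<in>UNIV. a $ i * b (i # js)) = contr a b js"
    by (simp add: contr_def)
  also have "(\<Sum>v\<in>Rp. (\<Sum>i\<in>UNIV. a $ i * v $ i) * contr v b js) = contr (\<Sum>v\<in>Rp. (a \<bullet> v) *\<^sub>R v) b js"
    by (simp add: contr_sum_scaleR inner_vec_def)
  finally show ?thesis .
qed

theorem theorem3p6:
  fixes R Rp :: "(real^'n::finite) set" and \<kappa> :: real and m :: nat
    and a :: "real^'n" and b :: "'n form"
  assumes "root_system R"
    and "\<forall>v\<in>R. v \<bullet> v = 2"
    and "positive_roots R Rp"
    and "one_refl_class R"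
    and "1 \<le> m" and "m \<le> CARD('n)"
    and "b \<in> wedge m"
  defines "\<gamma> \<equiv> 2 * real (card Rp) / real CARD('n)"
  shows "contr_x b \<in> P1_wedge (m - 1)
    \<and> (\<forall>x. (\<lambda>js. \<Sum>i\<in>UNIV. a $ i * dunkl Rp \<kappa> i (contr_x b) x js)
            = (\<lambda>js. (1 + \<gamma> * \<kappa>) * contr a b js))
    \<and> (\<kappa> = - 1 / \<gamma> \<longrightarrow> (\<forall>i x. dunkl Rp \<kappa> i (contr_x b) x = (\<lambda>js. 0)))"
proof -
  have "Suc (m - 1) = m"
    using assms(5) by simp
  then have polynomial: "contr_x b \<in> P1_wedge (m - 1)"
    using contr_x_in_P1_wedge[of b "m - 1"] assms(7) by simp
  have "0 \<notin> Rp"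
    using positive_roots_subset[OF assms(3)] assms(2) by force
  moreover have "(\<Sum>v\<in>Rp. (a \<bullet> v) *\<^sub>R v) = \<gamma> *\<^sub>R a" for a
    unfolding \<gamma>_def by (rule sum_positive_roots_inner_scaleR[OF assms(1-4)])
  ultimately have sum_dunkl:
    "(\<Sum>i\<in>UNIV. a $ i * dunkl Rp \<kappa> i (contr_x b) x js) = (1 + \<gamma> * \<kappa>) * contr a b js" for a x js
    by (simp add: sum_dunkl_contr_x[OF assms(7)] contr_scaleR algebra_simps)
  have "\<gamma> \<noteq> 0"
    using card_positive_roots_pos[OF assms(1-3)] unfolding \<gamma>_def by simp
  then have "dunkl Rp \<kappa> i (contr_x b) x = (\<lambda>js. 0)" if "\<kappa> = - 1 / \<gamma>" for i x
    using sum_dunkl[of "axis i 1"] that by (simp add: sum_axis_mult contr_axis fun_eq_iff)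
  with polynomial sum_dunkl show ?thesis
    by auto
qed

end
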